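(* Let $(P,\preceq)$ be a poset, $\mathcal{X}:=\{X\subseteq P\mid (X,\preceq)\text{ well-ordered}\}$, $\Lambda$ a set, $\mathcal{I},\mathcal{O}\subseteq\Lambda$ finite disjoint sets, and $s$ a causal $(\mathcal{I},\mathcal{O})$-system over $\mathcal{X}$. Let $i\in\mathcal{I}$, $o\in\mathcal{O}$. Then for every $\mathbf{X}\in\mathcal{X}^{\mathcal{I}\setminus\{i\}}$ there exists a unique $X_i\in\mathcal{X}$ such that $s(\mathbf{X}\cup\{(i,X_i)\})(o)=X_i$.
   Context: $\mathcal{X}^{\mathcal{I}}$ is the set of functions $\mathcal{I}\to\mathcal{X}$. A causal $(\mathcal{I},\mathcal{O})$-system over $\mathcal{X}$ is a function $s:\mathcal{X}^{\mathcal{I}}\to\mathcal{X}^{\mathcal{O}}$ such that for all $\mathbf{X},\mathbf{X}'\in\mathcal{X}^{\mathcal{I}}$, all $o\in\mathcal{O}$ and all $y\in s(\mathbf{X})(o)\mathbin{\triangle}s(\mathbf{X}')(o)$ there exist $i\in\mathcal{I}$ and $x\in\mathbf{X}(i)\mathbin{\triangle}\mathbf{X}'(i)$ with $x\prec y$ (where $\mathbin{\triangle}$ is symmetric difference and $x\prec y$ means $x\preceq y$, $x\ne y$). *)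

theory Defs
  imports "HOL-Library.FuncSet"
begin

definition well_ordered_subset :: "'a::order set \<Rightarrow> bool" where
  "well_ordered_subset X \<longleftrightarrow>
     (\<forall>x\<in>X. \<forall>y\<in>X. x \<le> y \<or> y \<le> x) \<and>
     (\<forall>S. S \<subseteq> X \<longrightarrow> S \<noteq> {} \<longrightarrow> (\<exists>m\<in>S. \<forall>y\<in>S. m \<le> y))"

definition WO_sets :: "'a::order set set" where
  "WO_sets = {X. well_ordered_subset X}"

text \<open>Elements of X^I are extensional functions I -> X (value undefined outside I).
A causal (I,O)-system over X.\<close>
definition causal_system ::
  "'l set \<Rightarrow> 'l set \<Rightarrow> (('l \<Rightarrow> 'a::order set) \<Rightarrow> ('l \<Rightarrow> 'a set)) \<Rightarrow> bool" where
  "causal_system Ins Outs s \<longleftrightarrow>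
     (\<forall>X\<in>(Ins \<rightarrow>\<^sub>E WO_sets). s X \<in> (Outs \<rightarrow>\<^sub>E WO_sets)) \<and>
     (\<forall>X\<in>(Ins \<rightarrow>\<^sub>E WO_sets). \<forall>X'\<in>(Ins \<rightarrow>\<^sub>E WO_sets). \<forall>ou\<in>Outs.
        \<forall>y \<in> (s X ou - s X' ou) \<union> (s X' ou - s X ou).
          \<exists>i\<in>Ins. \<exists>x \<in> (X i - X' i) \<union> (X' i - X i). x < y)"

end

theory Submission
  imports Defs
begin

text \<open>Fixing all inputs but one and looking at one output turns a causal system into a map
  \<open>f\<close> on well-ordered sets whose output can change at \<open>y\<close> only if the input changes strictly
  below \<open>y\<close>. Two fixed points of such a map agree below the least element of their symmetric
  difference, hence at that element too, so they are equal. For existence, call \<open>A\<close> an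
  approximant if it is an initial segment of \<open>f A\<close>; approximants form a chain of initial
  segments, their union \<open>U\<close> is again one, and if \<open>f U \<noteq> U\<close> then adjoining the least element
  of \<open>f U - U\<close> yields a strictly larger approximant.\<close>

lemma WO_sets_total: "X \<in> WO_sets \<Longrightarrow> x \<in> X \<Longrightarrow> y \<in> X \<Longrightarrow> x \<le> y \<or> y \<le> x"
  unfolding WO_sets_def well_ordered_subset_def by blast

lemma WO_sets_least: "X \<in> WO_sets \<Longrightarrow> S \<subseteq> X \<Longrightarrow> S \<noteq> {} \<Longrightarrow> \<exists>m\<in>S. \<forall>y\<in>S. m \<le> y"
  unfolding WO_sets_def well_ordered_subset_def by blast

lemma WO_sets_subset: "X \<in> WO_sets \<Longrightarrow> Y \<subseteq> X \<Longrightarrow> Y \<in> WO_sets"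
  unfolding WO_sets_def well_ordered_subset_def by (simp add: subset_iff)

lemma minimal_in_union_of_least:
  fixes a b :: "'a::order"
  assumes "a \<in> S" "\<forall>y\<in>S. a \<le> y" "b \<in> T" "\<forall>y\<in>T. b \<le> y"
  shows "\<exists>m\<in>S \<union> T. \<forall>x\<in>S \<union> T. \<not> x < m"
proof (cases "\<exists>x\<in>T. x < a")
  case True
  then have "b < a" using assms(4) by (meson order.strict_trans1)
  then have "\<forall>x\<in>S \<union> T. \<not> x < b"
    using assms(2,4) by (meson UnE leD less_asym order_le_less_trans)
  then show ?thesis using assms(3) by blast
next
  case False
  then have "\<forall>x\<in>S \<union> T. \<not> x < a" using assms(2) by (auto simp: leD)
  then show ?thesis using assms(1) by blast
qed

lemma WO_sets_minimal_sym_diff: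
  fixes A B :: "'a::order set"
  assumes "A \<in> WO_sets" "B \<in> WO_sets" "A \<noteq> B"
  shows "\<exists>m \<in> sym_diff A B. \<forall>x\<in>sym_diff A B. \<not> x < m"
proof -
  have least: "\<exists>m\<in>S. \<forall>y\<in>S. \<not> y < m" if "S \<noteq> {}" "S \<subseteq> A \<or> S \<subseteq> B" for S
    using that WO_sets_least[of _ S] assms(1,2) by (meson leD)
  consider "A - B = {}" | "B - A = {}" | "A - B \<noteq> {}" "B - A \<noteq> {}" by blast
  then show ?thesis
  proof cases
    case 1
    then have "sym_diff A B = B - A" by blast
    then show ?thesis using least[of "B - A"] assms(3) 1 by auto
  next
    case 2
    then have "sym_diff A B = A - B" by blast
    then show ?thesis using least[of "A - B"] assms(3) 2 by auto
  next
    case 3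
    obtain a b where "a \<in> A - B" "\<forall>y\<in>A - B. a \<le> y" "b \<in> B - A" "\<forall>y\<in>B - A. b \<le> y"
      using WO_sets_least[OF assms(1), of "A - B"] WO_sets_least[OF assms(2), of "B - A"] 3 by blast
    then show ?thesis by (rule minimal_in_union_of_least)
  qed
qed

definition initial_segment :: "'a::order set \<Rightarrow> 'a set \<Rightarrow> bool" where
  "initial_segment A B \<longleftrightarrow> A \<subseteq> B \<and> (\<forall>a\<in>A. \<forall>b\<in>B. b \<le> a \<longrightarrow> b \<in> A)"

lemma initial_segment_less:
  assumes "initial_segment A C" "C \<in> WO_sets" "m \<in> C - A" "a \<in> A"
  shows "a < m"
proof -
  have "a \<le> m \<or> m \<le> a" using WO_sets_total assms by (auto simp: initial_segment_def)
  moreover have "\<not> m \<le> a" using assms by (auto simp: initial_segment_def)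
  ultimately show ?thesis using assms(3,4) by (auto simp: order.order_iff_strict)
qed

locale strictly_causal_map =
  fixes f :: "'a::order set \<Rightarrow> 'a set"
  assumes maps_WO_sets: "\<And>A. A \<in> WO_sets \<Longrightarrow> f A \<in> WO_sets"
    and causal: "\<And>A B y. A \<in> WO_sets \<Longrightarrow> B \<in> WO_sets \<Longrightarrow>
       y \<in> sym_diff (f A) (f B) \<Longrightarrow> \<exists>x\<in>sym_diff A B. x < y"
begin

lemma agree_below:
  assumes "A \<in> WO_sets" "B \<in> WO_sets" "\<forall>x\<in>sym_diff A B. \<not> x < y"
  shows "y \<in> f A \<longleftrightarrow> y \<in> f B"
  using causal[OF assms(1,2), of y] assms(3) by blast

lemma fixpoint_unique:
  assumes "A \<in> WO_sets" "B \<in> WO_sets" "f A = A" "f B = B"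
  shows "A = B"
proof (rule ccontr)
  assume "A \<noteq> B"
  then obtain m where "m \<in> sym_diff A B" "\<forall>x\<in>sym_diff A B. \<not> x < m"
    using WO_sets_minimal_sym_diff assms(1,2) by blast
  then show False using agree_below[OF assms(1,2)] assms(3,4) by blast
qed

definition approximant :: "'a set \<Rightarrow> bool" where
  "approximant A \<longleftrightarrow> A \<in> WO_sets \<and> initial_segment A (f A)"

lemma approximant_initial_segment_of_other:
  assumes A: "approximant A" and B: "approximant B"
    and m: "m \<in> A - B" and m_minimal: "\<forall>x\<in>sym_diff A B. \<not> x < m"
  shows "initial_segment B A"
proof -
  have WO: "A \<in> WO_sets" "B \<in> WO_sets" and "A \<subseteq> f A" and segB: "initial_segment B (f B)"
    using A B by (auto simp: approximant_def initial_segment_def)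
  then have "m \<in> f B" using agree_below[OF WO] m m_minimal by blast
  have below_m: "b < m" if "b \<in> B" for b
    using initial_segment_less[OF segB maps_WO_sets[OF WO(2)]] \<open>m \<in> f B\<close> m that by blast
  then have "B \<subseteq> A" using m_minimal by blast
  moreover have "a \<in> B" if "b \<in> B" "a \<in> A" "a \<le> b" for a b
    using below_m[OF that(1)] that(2,3) m_minimal by (meson DiffI UnI1 order.strict_trans1)
  ultimately show ?thesis unfolding initial_segment_def by blast
qed

lemma approximants_chain:
  assumes "approximant A" "approximant B"
  shows "initial_segment A B \<or> initial_segment B A"
proof (cases "A = B")
  case False
  then obtain m where m: "m \<in> sym_diff A B" "\<forall>x\<in>sym_diff A B. \<not> x < m"
    using WO_sets_minimal_sym_diff[of A B] assms unfolding approximant_def by blast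
  show ?thesis
  proof (cases "m \<in> A")
    case True
    then show ?thesis using approximant_initial_segment_of_other[OF assms] m by blast
  next
    case False
    then show ?thesis using approximant_initial_segment_of_other[OF assms(2,1)] m by blast
  qed
qed (simp add: initial_segment_def)

lemma approximant_insert_least:
  assumes A: "approximant A" and m: "m \<in> f A - A" and m_least: "\<forall>y\<in>f A - A. m \<le> y"
  shows "approximant (insert m A)"
proof -
  define V where "V = insert m A"
  have WO: "A \<in> WO_sets" "f A \<in> WO_sets" and segA: "initial_segment A (f A)"
    using A maps_WO_sets by (auto simp: approximant_def)
  have below_m: "y < m" if "y \<in> A" for y
    using initial_segment_less[OF segA WO(2) m that] .
  have "V \<in> WO_sets"
    using WO_sets_subset[OF WO(2)] m segA by (auto simp: V_def initial_segment_def)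
  moreover have "sym_diff A V = {m}" using m by (auto simp: V_def)
  ultimately have same: "y \<in> f A \<longleftrightarrow> y \<in> f V" if "\<not> m < y" for y
    using agree_below[OF WO(1)] that by simp
  have "V \<subseteq> f V"
    using same m below_m segA by (auto simp: V_def initial_segment_def dest: less_asym)
  moreover have "y \<in> V" if "v \<in> V" "y \<in> f V" "y \<le> v" for v y
  proof -
    have "y \<le> m" using that below_m by (auto simp: V_def intro: order.trans less_imp_le)
    then have "y \<in> f A" using same that(2) by (simp add: leD)
    then show ?thesis using m_least \<open>y \<le> m\<close> by (auto simp: V_def intro: antisym)
  qed
  ultimately show ?thesis using \<open>V \<in> WO_sets\<close> by (simp add: approximant_def initial_segment_def V_def)
qed

definition approximants_union :: "'a set" where
  "approximants_union = \<Union>{A. approximant A}"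

lemma approximant_subset_union: "approximant A \<Longrightarrow> A \<subseteq> approximants_union"
  unfolding approximants_union_def by blast

lemma approximant_downward_closed_in_union:
  assumes "approximant A" "a \<in> A" "u \<in> approximants_union" "u \<le> a"
  shows "u \<in> A"
proof -
  obtain B where "approximant B" "u \<in> B" using assms(3) unfolding approximants_union_def by blast
  then show ?thesis
    using approximants_chain[OF assms(1) \<open>approximant B\<close>] assms(2,4)
    unfolding initial_segment_def by blast
qed

lemma approximants_union_total:
  assumes "x \<in> approximants_union" "y \<in> approximants_union"
  shows "x \<le> y \<or> y \<le> x"
proof -
  obtain A B where "approximant A" "approximant B" "x \<in> A" "y \<in> B"
    using assms unfolding approximants_union_def by blast
  moreover from this have "{x, y} \<subseteq> A \<or> {x, y} \<subseteq> B"
    using approximants_chain[of A B] unfolding initial_segment_def by blast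
  ultimately show ?thesis
    using WO_sets_total unfolding approximant_def by (metis insert_subset)
qed

lemma approximants_union_WO_sets: "approximants_union \<in> WO_sets"
  unfolding WO_sets_def well_ordered_subset_def
proof (intro CollectI conjI ballI allI impI)
  fix S assume S: "S \<subseteq> approximants_union" "S \<noteq> {}"
  then obtain A where A: "approximant A" "S \<inter> A \<noteq> {}" unfolding approximants_union_def by blast
  then obtain m where m: "m \<in> S \<inter> A" "\<forall>y\<in>S \<inter> A. m \<le> y"
    using WO_sets_least[of A "S \<inter> A"] by (auto simp: approximant_def)
  have "m \<le> y" if "y \<in> S" for y
    using approximants_union_total[of y m] approximant_downward_closed_in_union[OF A(1), of m y]
      m that S by blast
  then show "\<exists>m\<in>S. \<forall>y\<in>S. m \<le> y" using m by blast
qed (use approximants_union_total in blast)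

lemma approximant_agrees_with_union_below:
  assumes A: "approximant A" "a \<in> A" and "y \<le> a"
  shows "y \<in> f A \<longleftrightarrow> y \<in> f approximants_union"
proof -
  have "\<not> x < y" if x: "x \<in> sym_diff A approximants_union" for x
  proof
    assume "x < y"
    then have "x \<le> a" using \<open>y \<le> a\<close> by simp
    moreover have "x \<in> approximants_union" "x \<notin> A" using x approximant_subset_union[OF A(1)] by auto
    ultimately show False using approximant_downward_closed_in_union[OF A] by blast
  qed
  then show ?thesis
    using agree_below[of A approximants_union y] approximants_union_WO_sets A(1)
    unfolding approximant_def by blast
qed

lemma approximants_union_approximant: "approximant approximants_union"
proof -
  let ?U = approximants_union
  have "y \<in> f ?U" if "y \<in> ?U" for y
  proof -
    obtain A where A: "approximant A" "y \<in> A" using \<open>y \<in> ?U\<close> unfolding approximants_union_def by blast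
    then have "y \<in> f A" by (auto simp: approximant_def initial_segment_def)
    then show ?thesis using approximant_agrees_with_union_below[OF A order.refl] by blast
  qed
  moreover have "y \<in> ?U" if "u \<in> ?U" "y \<in> f ?U" "y \<le> u" for u y
  proof -
    obtain A where A: "approximant A" "u \<in> A" using \<open>u \<in> ?U\<close> unfolding approximants_union_def by blast
    then have "y \<in> f A" using approximant_agrees_with_union_below[OF A \<open>y \<le> u\<close>] \<open>y \<in> f ?U\<close> by blast
    then have "y \<in> A" using A \<open>y \<le> u\<close> by (auto simp: approximant_def initial_segment_def)
    then show ?thesis using approximant_subset_union[OF A(1)] by blast
  qed
  ultimately show ?thesis
    using approximants_union_WO_sets unfolding approximant_def initial_segment_def by blast
qed

lemma approximants_union_fixpoint: "f approximants_union = approximants_union"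
proof (rule ccontr)
  let ?U = approximants_union
  assume "f ?U \<noteq> ?U"
  moreover have "?U \<subseteq> f ?U" "f ?U \<in> WO_sets"
    using approximants_union_approximant maps_WO_sets by (auto simp: approximant_def initial_segment_def)
  ultimately obtain m where m: "m \<in> f ?U - ?U" "\<forall>y\<in>f ?U - ?U. m \<le> y"
    using WO_sets_least[of "f ?U" "f ?U - ?U"] by blast
  then have "approximant (insert m ?U)"
    using approximant_insert_least approximants_union_approximant by blast
  then have "m \<in> ?U" using approximant_subset_union by blast
  then show False using m by blast
qed

theorem ex1_fixpoint: "\<exists>!A. A \<in> WO_sets \<and> f A = A"
  using approximants_union_WO_sets approximants_union_fixpoint fixpoint_unique by blast

end

lemma causal_system_section:
  assumes "causal_system Ins Outs s" "i \<in> Ins" "ou \<in> Outs" "X \<in> (Ins - {i}) \<rightarrow>\<^sub>E WO_sets"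
  shows "strictly_causal_map (\<lambda>A. s (X(i := A)) ou)"
proof
  have update: "X(i := A) \<in> Ins \<rightarrow>\<^sub>E WO_sets" if "A \<in> WO_sets" for A
    using assms(2,4) that by (auto simp: PiE_def Pi_def extensional_def)
  note system = assms(1)[unfolded causal_system_def]
  show "s (X(i := A)) ou \<in> WO_sets" if "A \<in> WO_sets" for A
    using system update[OF that] assms(3) by blast
  fix A B y
  assume A: "A \<in> WO_sets" and B: "B \<in> WO_sets"
    and y: "y \<in> sym_diff (s (X(i := A)) ou) (s (X(i := B)) ou)"
  obtain j x where "x \<in> sym_diff ((X(i := A)) j) ((X(i := B)) j)" "x < y"
    using system update[OF A] update[OF B] assms(3) y by blast
  then show "\<exists>x\<in>sym_diff A B. x < y" by (cases "j = i") auto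
qed

theorem corollary6p3:
  fixes Ins Outs :: "'l set"
    and s :: "('l \<Rightarrow> 'a::order set) \<Rightarrow> ('l \<Rightarrow> 'a set)"
    and i ou :: 'l
  assumes "finite Ins" and "finite Outs" and "Ins \<inter> Outs = {}"
    and "causal_system Ins Outs s"
    and "i \<in> Ins" and "ou \<in> Outs"
  shows "\<forall>X \<in> (Ins - {i}) \<rightarrow>\<^sub>E WO_sets.
           \<exists>!Xi. Xi \<in> WO_sets \<and> s (X(i := Xi)) ou = Xi"
proof
  fix X :: "'l \<Rightarrow> 'a set" assume "X \<in> (Ins - {i}) \<rightarrow>\<^sub>E WO_sets"
  then interpret strictly_causal_map "\<lambda>A. s (X(i := A)) ou"
    by (rule causal_system_section[OF assms(4-6)])
  show "\<exists>!Xi. Xi \<in> WO_sets \<and> s (X(i := Xi)) ou = Xi"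
    by (rule ex1_fixpoint)
qed

end
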